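(* Let $G=(G_i,P_i)_{i\in I}$ be a qualitative game and let $R^0,R^1,R^2,\dots$ (a finite or countably infinite sequence) be pairings of $G$ with $R^0=G$ and $R^t\to R^{t+1}$ fast for each $t$. Then for each $t$, if Condition $C(t)$ holds, Condition $D(t)$ holds.
   Context: $I$ is a nonempty set of players. A qualitative game $G=(G_i,P_i)_{i\in I}$ consists of nonempty sets $G_i$ (subsets of topological vector spaces) and correspondences $P_i:\prod_{j\in I}G_j\to 2^{G_i}$. Write $G_{-i}=\prod_{j\neq i}G_j$ and $x=(x_i,x_{-i})$. A pairing of $G$ is a family $H=(H_i)_{i\in I}$ with $H_i\subseteq G_i$ (the $P_i$ being restricted to $\prod_j H_j$); $H_{-i}=\prod_{j\ne i}H_j$. For pairings $R,S$ of $G$ with $S_i\subseteq R_i$ for all $i$, $R\to S$ means: for every $i$ and every $x_i\in R_i\setminus S_i$, $\bigcap_{x_{-i}\in R_{-i}}P_i(x_i,x_{-i})\neq\emptyset$; the reduction $R\to S$ is fast if in addition, for every $i$ and $x_i\in R_i$, $\bigcap_{x_{-i}\in R_{-i}}P_i(x_i,x_{-i})\neq\emptyset$ implies $x_i\notin S_i$. Condition $C(t)$: for all $i\in I$ and all $x_i\in G_i$, if $R^t_{-i}\neq\emptyset$ and there is $y_i\in G_i$ with $y_i\in P_i(x_i,x_{-i})$ for all $x_{-i}\in R^t_{-i}$, then there is $x_i^*\in G_i$ with $x_i^*\in P_i(x_i,x_{-i})$ for all $x_{-i}\in R^t_{-i}$ and $\bigcap_{x_{-i}\in R^t_{-i}}P_i(x_i^*,x_{-i})=\emptyset$.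 Condition $D(t)$: for all $i\in I$ and all $x_i\in G_i$, if $R^t_{-i}\neq\emptyset$ and $\bigcap_{x_{-i}\in R^t_{-i}}P_i(x_i,x_{-i})\neq\emptyset$, then $\bigcap_{x_{-i}\in R^t_{-i}}P_i(x_i,x_{-i})\cap R^t_i\neq\emptyset$. *)

theory Defs
  imports "HOL-Library.FuncSet" "HOL-Library.Extended_Nat"
begin

text \<open>Strategy profiles are functions from players to strategies (a common strategy type 'a);
  a product of strategy sets is PiE.  Profiles of the other players are PiE over I - {i},
  and (x_i, x_{-i}) is the update xmi(i := xi).\<close>

definition others :: "'i set \<Rightarrow> ('i \<Rightarrow> 'a set) \<Rightarrow> 'i \<Rightarrow> ('i \<Rightarrow> 'a) set" where
  "others I H i = PiE (I - {i}) H"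

definition common_pref ::
  "'i set \<Rightarrow> ('i \<Rightarrow> ('i \<Rightarrow> 'a) \<Rightarrow> 'a set) \<Rightarrow> ('i \<Rightarrow> 'a set) \<Rightarrow> 'i \<Rightarrow> 'a \<Rightarrow> 'a set" where
  "common_pref I P H i xi = (\<Inter>xmi \<in> others I H i. P i (xmi(i := xi)))"

definition qual_game ::
  "'i set \<Rightarrow> ('i \<Rightarrow> 'a set) \<Rightarrow> ('i \<Rightarrow> ('i \<Rightarrow> 'a) \<Rightarrow> 'a set) \<Rightarrow> bool" where
  "qual_game I G P \<longleftrightarrow> I \<noteq> {} \<and> (\<forall>i\<in>I. G i \<noteq> {}) \<and>
     (\<forall>i\<in>I. \<forall>x\<in>PiE I G. P i x \<subseteq> G i)"

definition pairing :: "'i set \<Rightarrow> ('i \<Rightarrow> 'a set) \<Rightarrow> ('i \<Rightarrow> 'a set) \<Rightarrow> bool" where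
  "pairing I G H \<longleftrightarrow> (\<forall>i\<in>I. H i \<subseteq> G i)"

definition reduces ::
  "'i set \<Rightarrow> ('i \<Rightarrow> ('i \<Rightarrow> 'a) \<Rightarrow> 'a set) \<Rightarrow> ('i \<Rightarrow> 'a set) \<Rightarrow> ('i \<Rightarrow> 'a set) \<Rightarrow> bool" where
  "reduces I P R S \<longleftrightarrow> (\<forall>i\<in>I. S i \<subseteq> R i) \<and>
     (\<forall>i\<in>I. \<forall>xi\<in>R i - S i. common_pref I P R i xi \<noteq> {})"

definition fast_reduces ::
  "'i set \<Rightarrow> ('i \<Rightarrow> ('i \<Rightarrow> 'a) \<Rightarrow> 'a set) \<Rightarrow> ('i \<Rightarrow> 'a set) \<Rightarrow> ('i \<Rightarrow> 'a set) \<Rightarrow> bool" where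
  "fast_reduces I P R S \<longleftrightarrow> reduces I P R S \<and>
     (\<forall>i\<in>I. \<forall>xi\<in>R i. common_pref I P R i xi \<noteq> {} \<longrightarrow> xi \<notin> S i)"

definition cond_C ::
  "'i set \<Rightarrow> ('i \<Rightarrow> 'a set) \<Rightarrow> ('i \<Rightarrow> ('i \<Rightarrow> 'a) \<Rightarrow> 'a set) \<Rightarrow> ('i \<Rightarrow> 'a set) \<Rightarrow> bool" where
  "cond_C I G P Rt \<longleftrightarrow> (\<forall>i\<in>I. \<forall>xi\<in>G i.
     others I Rt i \<noteq> {} \<and> (\<exists>yi\<in>G i. \<forall>xmi\<in>others I Rt i. yi \<in> P i (xmi(i := xi)))
     \<longrightarrow> (\<exists>xs\<in>G i. (\<forall>xmi\<in>others I Rt i. xs \<in> P i (xmi(i := xi))) \<and>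
                    common_pref I P Rt i xs = {}))"

definition cond_D ::
  "'i set \<Rightarrow> ('i \<Rightarrow> 'a set) \<Rightarrow> ('i \<Rightarrow> ('i \<Rightarrow> 'a) \<Rightarrow> 'a set) \<Rightarrow> ('i \<Rightarrow> 'a set) \<Rightarrow> bool" where
  "cond_D I G P Rt \<longleftrightarrow> (\<forall>i\<in>I. \<forall>xi\<in>G i.
     others I Rt i \<noteq> {} \<and> common_pref I P Rt i xi \<noteq> {}
     \<longrightarrow> common_pref I P Rt i xi \<inter> Rt i \<noteq> {})"

end

theory Submission
  imports Defs
begin

text \<open>Condition C(t) provides, for any x_i with a common improvement, a common improvement x_i^*
  that itself has none against R^t_{-i}. Since the pairings decrease, x_i^* has no common
  improvement against any earlier R^s_{-i} either, so no reduction step can ever remove it: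
  x_i^* lies in R^t_i, which is exactly what D(t) asks for.\<close>

lemma common_pref_antimono:
  assumes "\<forall>j\<in>I. S j \<subseteq> T j"
  shows "common_pref I P T i x \<subseteq> common_pref I P S i x"
proof -
  have "others I S i \<subseteq> others I T i"
    unfolding others_def using assms by (auto simp: PiE_def Pi_def)
  then show ?thesis
    unfolding common_pref_def by blast
qed

lemma common_pref_subset:
  assumes "qual_game I G P" and "pairing I G H" and "i \<in> I" and "xi \<in> G i"
    and "others I H i \<noteq> {}"
  shows "common_pref I P H i xi \<subseteq> G i"
proof -
  obtain xmi where xmi: "xmi \<in> others I H i"
    using assms(5) by blast
  have "xmi(i := xi) \<in> PiE I G"
    using xmi assms(2-4) unfolding others_def pairing_def
    by (auto simp: PiE_def Pi_def extensional_def)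
  then have "P i (xmi(i := xi)) \<subseteq> G i"
    using assms(1,3) unfolding qual_game_def by blast
  then show ?thesis
    using xmi unfolding common_pref_def by blast
qed

lemma reduces_keeps_unimprovable:
  assumes "reduces I P R S" and "i \<in> I" and "x \<in> R i" and "common_pref I P R i x = {}"
  shows "x \<in> S i"
  using assms unfolding reduces_def by blast

lemma reduction_chain_keeps_unimprovable:
  assumes red: "\<And>t. enat (Suc t) < N \<Longrightarrow> reduces I P (R t) (R (Suc t))"
    and "i \<in> I" and "x \<in> R 0 i"
  shows "enat t < N \<Longrightarrow> common_pref I P (R t) i x = {} \<Longrightarrow> x \<in> R t i"
proof (induction t)
  case 0
  then show ?case using assms(3) by simp
next
  case (Suc t)
  have step: "reduces I P (R t) (R (Suc t))"
    using red Suc.prems(1) .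
  have "\<forall>j\<in>I. R (Suc t) j \<subseteq> R t j"
    using step unfolding reduces_def by blast
  then have "common_pref I P (R t) i x \<subseteq> common_pref I P (R (Suc t)) i x"
    by (rule common_pref_antimono)
  with Suc.prems(2) have unimprovable: "common_pref I P (R t) i x = {}"
    by blast
  have "enat t < N"
    using less_trans[of "enat t" "enat (Suc t)" N] Suc.prems(1) by simp
  then have "x \<in> R t i"
    using unimprovable by (rule Suc.IH)
  then show ?case
    by (rule reduces_keeps_unimprovable[OF step \<open>i \<in> I\<close> _ unimprovable])
qed

theorem lemma2:
  fixes I :: "'i set" and G :: "'i \<Rightarrow> 'a set" and P :: "'i \<Rightarrow> ('i \<Rightarrow> 'a) \<Rightarrow> 'a set"
    and R :: "nat \<Rightarrow> 'i \<Rightarrow> 'a set" and N :: enat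
  assumes game: "qual_game I G P"
    and len: "0 < N"
    and pair: "\<And>t. enat t < N \<Longrightarrow> pairing I G (R t)"
    and R0: "\<And>i. i \<in> I \<Longrightarrow> R 0 i = G i"
    and fast: "\<And>t. enat (Suc t) < N \<Longrightarrow> fast_reduces I P (R t) (R (Suc t))"
    and t: "enat t < N"
    and C: "cond_C I G P (R t)"
  shows "cond_D I G P (R t)"
  unfolding cond_D_def
proof (intro ballI impI)
  fix i xi
  assume i: "i \<in> I" and xi: "xi \<in> G i"
    and improvable: "others I (R t) i \<noteq> {} \<and> common_pref I P (R t) i xi \<noteq> {}"
  then obtain y where y: "y \<in> common_pref I P (R t) i xi"
    by blast
  have "y \<in> G i"
    using common_pref_subset[OF game pair[OF t] i xi] improvable y by blast
  moreover have "\<forall>xmi\<in>others I (R t) i. y \<in> P i (xmi(i := xi))"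
    using y unfolding common_pref_def by blast
  ultimately obtain xs where "xs \<in> G i"
    and xs_pref: "\<forall>xmi\<in>others I (R t) i. xs \<in> P i (xmi(i := xi))"
    and xs_unimprovable: "common_pref I P (R t) i xs = {}"
    using C i xi improvable unfolding cond_C_def by blast
  have red: "\<And>s. enat (Suc s) < N \<Longrightarrow> reduces I P (R s) (R (Suc s))"
    using fast unfolding fast_reduces_def by blast
  have "xs \<in> R t i"
    using reduction_chain_keeps_unimprovable[OF red i _ t xs_unimprovable] R0[OF i] \<open>xs \<in> G i\<close>
    by simp
  moreover have "xs \<in> common_pref I P (R t) i xi"
    using xs_pref unfolding common_pref_def by blast
  ultimately show "common_pref I P (R t) i xi \<inter> R t i \<noteq> {}"
    by blast
qed

end
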